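(* Let $U=(u_{ij})\in\mathcal{U}_d(\mathbb{C})$. For every $M\in\mathbb{N}$ there exist $D_1,\dots,D_{2M}\in\mathcal{DU}_d(\mathbb{C})$ such that for all $k,l\in\{1,\dots,d\}$, $$\left((P_U^TP_U)^M\right)_{kl}=0\iff\left(D_1U^\dagger D_2U\cdots D_{2M-1}U^\dagger D_{2M}U\right)_{kl}=0.$$
   Context: $\mathcal{U}_d(\mathbb{C})$ denotes the group of $d\times d$ unitary matrices and $\mathcal{DU}_d(\mathbb{C})$ its subgroup of diagonal unitary matrices. $P_U=(p_{ij})$ is the $0/1$ matrix with $p_{ij}=0$ if $u_{ij}=0$ and $p_{ij}=1$ if $u_{ij}\neq0$. *)

theory Defs
  imports "HOL-Analysis.Analysis"
begin

text \<open>Square matrices of size d are represented as complex^'n^'n with d = CARD('n).\<close>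

definition conj_transpose :: "complex^'n^'n \<Rightarrow> complex^'n^'n" where
  "conj_transpose A = (\<chi> i j. cnj (A $ j $ i))"

definition unitary_mat :: "complex^'n^'n \<Rightarrow> bool" where
  "unitary_mat U \<longleftrightarrow> U ** conj_transpose U = mat 1 \<and> conj_transpose U ** U = mat 1"

definition diag_unitary_mat :: "complex^'n^'n \<Rightarrow> bool" where
  "diag_unitary_mat D \<longleftrightarrow> (\<forall>i j. i \<noteq> j \<longrightarrow> D $ i $ j = 0) \<and> (\<forall>i. cmod (D $ i $ i) = 1)"

definition pattern_mat :: "complex^'n^'n \<Rightarrow> nat^'n^'n" where
  "pattern_mat U = (\<chi> i j. if U $ i $ j = 0 then 0 else 1)"

fun mat_pow :: "'a::semiring_1^'n^'n \<Rightarrow> nat \<Rightarrow> 'a^'n^'n" where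
  "mat_pow A 0 = mat 1"
| "mat_pow A (Suc m) = mat_pow A m ** A"

fun alt_prod :: "(nat \<Rightarrow> complex^'n^'n) \<Rightarrow> complex^'n^'n \<Rightarrow> nat \<Rightarrow> complex^'n^'n" where
  "alt_prod D U 0 = mat 1"
| "alt_prod D U (Suc m) =
     alt_prod D U m ** (D (2*m+1) ** conj_transpose U ** D (2*m+2) ** U)"

end

theory Submission
  imports Defs "HOL-Computational_Algebra.Polynomial"
begin

text \<open>Write \<open>E t\<close> for the diagonal matrix with entries \<open>t ^ f j\<close>, where \<open>f\<close> numbers the indices
  injectively. Then \<open>(A ** E t ** V) $ k $ l\<close> is a polynomial in \<open>t\<close> whose coefficients are the
  products \<open>A $ k $ j * V $ j $ l\<close>, each sitting in its own degree \<open>f j\<close>; so it is the zero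
  polynomial exactly when all these products vanish. Choosing \<open>t\<close> on the unit circle outside
  the finitely many roots of the nonzero ones makes \<open>E t\<close> a diagonal unitary for which no
  cancellation occurs: the zero pattern of \<open>A ** E t ** V\<close> is the Boolean product of the zero
  patterns of \<open>A\<close> and \<open>V\<close>. Inserting such phases between the factors \<open>U\<^sup>\<dagger>\<close> and \<open>U\<close> one at a
  time gives the theorem by induction on \<open>M\<close>.\<close>

lemma infinite_unit_circle: "infinite (sphere (0::complex) 1)"
proof
  assume "finite (sphere (0::complex) 1)"
  moreover have "connected (sphere (0::complex) 1)"
    by (simp add: connected_sphere)
  ultimately have "sphere (0::complex) 1 = {} \<or> (\<exists>a. sphere (0::complex) 1 = {a})"
    using connected_finite_iff_sing by blast
  moreover have "1 \<in> sphere (0::complex) 1" "-1 \<in> sphere (0::complex) 1"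
    by auto
  ultimately show False
    by (metis empty_iff singletonD one_neq_neg_one)
qed

lemma ex_unit_not_root:
  fixes p :: "'i::finite \<Rightarrow> complex poly"
  shows "\<exists>t. cmod t = 1 \<and> (\<forall>i. p i \<noteq> 0 \<longrightarrow> poly (p i) t \<noteq> 0)"
proof -
  let ?roots = "\<Union>i\<in>{i. p i \<noteq> 0}. {t. poly (p i) t = 0}"
  have "finite ?roots"
    by (auto intro: poly_roots_finite)
  then have "infinite (sphere 0 1 - ?roots)"
    using Diff_infinite_finite infinite_unit_circle by blast
  then obtain t where "t \<in> sphere 0 1 - ?roots"
    using infinite_imp_nonempty by blast
  then show ?thesis by auto
qed

lemma sum_monom_eq_0_iff:
  assumes "finite J" and "inj_on f J"
  shows "(\<Sum>j\<in>J. monom (c j) (f j)) = 0 \<longleftrightarrow> (\<forall>j\<in>J. c j = 0)"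
proof
  assume sum_0: "(\<Sum>j\<in>J. monom (c j) (f j)) = 0"
  have "c j = 0" if "j \<in> J" for j
  proof -
    have "c j = (\<Sum>i\<in>J. if f i = f j then c i else 0)"
      using that assms by (simp add: inj_on_eq_iff cong: if_cong)
    also have "\<dots> = coeff (\<Sum>i\<in>J. monom (c i) (f i)) (f j)"
      by (simp add: coeff_sum)
    finally show ?thesis using sum_0 by simp
  qed
  then show "\<forall>j\<in>J. c j = 0" by blast
qed simp

definition diag_mat :: "('n \<Rightarrow> 'a::zero) \<Rightarrow> 'a^'n^'n" where
  "diag_mat e = (\<chi> i j. if i = j then e i else 0)"

lemma diag_unitary_mat_diag_mat: "diag_unitary_mat (diag_mat e) \<longleftrightarrow> (\<forall>i. cmod (e i) = 1)"
  by (simp add: diag_unitary_mat_def diag_mat_def)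

lemma matrix_mult_diag_mat_nth:
  fixes A :: "'a::semiring_1^'n^'n"
  shows "(A ** diag_mat e) $ k $ j = A $ k $ j * e j"
  unfolding matrix_matrix_mult_def diag_mat_def
  by (simp add: if_distrib[where f="\<lambda>x. _ * x"] cong: if_cong)

lemma matrix_mult_diag_power_nth:
  fixes A V :: "'a::comm_semiring_1^'n^'n"
  shows "(A ** diag_mat (\<lambda>j. t ^ f j) ** V) $ k $ l
           = poly (\<Sum>j\<in>UNIV. monom (A $ k $ j * V $ j $ l) (f j)) t"
  unfolding matrix_matrix_mult_def[of "A ** _"] matrix_mult_diag_mat_nth
  by (simp add: poly_sum poly_monom mult_ac)

lemma ex_diag_unitary_mult_nonzero_iff:
  fixes A V :: "complex^'n^'n"
  shows "\<exists>E. diag_unitary_mat E \<and>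
     (\<forall>k l. (A ** E ** V) $ k $ l \<noteq> 0 \<longleftrightarrow> (\<exists>j. A $ k $ j \<noteq> 0 \<and> V $ j $ l \<noteq> 0))"
proof -
  obtain f :: "'n \<Rightarrow> nat" where "inj f"
    using finite_imp_inj_to_nat_seg[of "UNIV :: 'n set"] by auto
  define p where "p k l = (\<Sum>j\<in>UNIV. monom (A $ k $ j * V $ j $ l) (f j))" for k l
  have p_eq_0: "p k l = 0 \<longleftrightarrow> (\<forall>j. A $ k $ j * V $ j $ l = 0)" for k l
    unfolding p_def using sum_monom_eq_0_iff[of UNIV f "\<lambda>j. A $ k $ j * V $ j $ l"] \<open>inj f\<close> by simp
  obtain t where "cmod t = 1" and t: "\<forall>k l. p k l \<noteq> 0 \<longrightarrow> poly (p k l) t \<noteq> 0"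
    using ex_unit_not_root[of "\<lambda>(k, l). p k l"] by auto
  show ?thesis
  proof (intro exI conjI allI)
    show "diag_unitary_mat (diag_mat (\<lambda>j. t ^ f j))"
      using \<open>cmod t = 1\<close> by (simp add: diag_unitary_mat_diag_mat norm_power)
    have "(A ** diag_mat (\<lambda>j. t ^ f j) ** V) $ k $ l = poly (p k l) t" for k l
      by (simp add: p_def matrix_mult_diag_power_nth)
    then show "(A ** diag_mat (\<lambda>j. t ^ f j) ** V) $ k $ l \<noteq> 0 \<longleftrightarrow>
        (\<exists>j. A $ k $ j \<noteq> 0 \<and> V $ j $ l \<noteq> 0)" for k l
      using t p_eq_0[of k l] by auto
  qed
qed

lemma matrix_mult_nat_nonzero_iff:
  fixes X Y :: "nat^'n^'n"
  shows "(X ** Y) $ k $ l \<noteq> 0 \<longleftrightarrow> (\<exists>j. X $ k $ j \<noteq> 0 \<and> Y $ j $ l \<noteq> 0)"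
  unfolding matrix_matrix_mult_def by simp

lemma pattern_gram_nonzero_iff:
  "(transpose (pattern_mat U) ** pattern_mat U) $ j $ l \<noteq> 0 \<longleftrightarrow>
     (\<exists>i. U $ i $ j \<noteq> 0 \<and> U $ i $ l \<noteq> 0)"
  unfolding matrix_mult_nat_nonzero_iff by (auto simp: transpose_def pattern_mat_def)

lemma alt_prod_cong:
  "(\<And>j. j \<le> 2*m \<Longrightarrow> D j = D' j) \<Longrightarrow> alt_prod D U m = alt_prod D' U m"
  by (induction m) auto

lemma alt_prod_Suc_nonzero_iff:
  assumes "\<forall>j\<in>{1..2*m}. diag_unitary_mat (D j)"
  obtains D' where "\<forall>j\<in>{1..2*Suc m}. diag_unitary_mat (D' j)"
    and "\<forall>k l. alt_prod D' U (Suc m) $ k $ l \<noteq> 0 \<longleftrightarrow>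
        (\<exists>j. alt_prod D U m $ k $ j \<noteq> 0 \<and> (\<exists>i. U $ i $ j \<noteq> 0 \<and> U $ i $ l \<noteq> 0))"
proof -
  let ?A = "alt_prod D U m"
  obtain E1 where E1: "diag_unitary_mat E1"
    "\<forall>k i. (?A ** E1 ** conj_transpose U) $ k $ i \<noteq> 0 \<longleftrightarrow>
        (\<exists>j. ?A $ k $ j \<noteq> 0 \<and> U $ i $ j \<noteq> 0)"
    using ex_diag_unitary_mult_nonzero_iff[of ?A "conj_transpose U"]
    by (auto simp: conj_transpose_def)
  obtain E2 where E2: "diag_unitary_mat E2"
    "\<forall>k l. (?A ** E1 ** conj_transpose U ** E2 ** U) $ k $ l \<noteq> 0 \<longleftrightarrow>
        (\<exists>i. (?A ** E1 ** conj_transpose U) $ k $ i \<noteq> 0 \<and> U $ i $ l \<noteq> 0)"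
    using ex_diag_unitary_mult_nonzero_iff by blast
  define D' where "D' = D(2*m+1 := E1, 2*m+2 := E2)"
  have "alt_prod D' U m = ?A"
    by (rule alt_prod_cong) (auto simp: D'_def)
  then have prod_eq: "alt_prod D' U (Suc m) = ?A ** E1 ** conj_transpose U ** E2 ** U"
    by (simp add: D'_def matrix_mul_assoc)
  have "\<forall>j\<in>{1..2*Suc m}. diag_unitary_mat (D' j)"
    using assms E1(1) E2(1) by (auto simp: D'_def)
  moreover have "alt_prod D' U (Suc m) $ k $ l \<noteq> 0 \<longleftrightarrow>
      (\<exists>j. ?A $ k $ j \<noteq> 0 \<and> (\<exists>i. U $ i $ j \<noteq> 0 \<and> U $ i $ l \<noteq> 0))" for k l
  proof -
    have "alt_prod D' U (Suc m) $ k $ l \<noteq> 0 \<longleftrightarrow>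
        (\<exists>i. (\<exists>j. ?A $ k $ j \<noteq> 0 \<and> U $ i $ j \<noteq> 0) \<and> U $ i $ l \<noteq> 0)"
      unfolding prod_eq by (simp only: E1(2) E2(2))
    then show ?thesis by blast
  qed
  ultimately show ?thesis using that by blast
qed

theorem lemma24:
  fixes U :: "complex^'n^'n" and M :: nat
  assumes "unitary_mat U"
  shows "\<exists>D :: nat \<Rightarrow> complex^'n^'n.
           (\<forall>j\<in>{1..2*M}. diag_unitary_mat (D j)) \<and>
           (\<forall>k l. (mat_pow (transpose (pattern_mat U) ** pattern_mat U) M) $ k $ l = 0
                  \<longleftrightarrow> (alt_prod D U M) $ k $ l = 0)"
proof (induction M)
  case 0
  show ?case by (auto simp: mat_def)
next
  case (Suc m)
  let ?Q = "transpose (pattern_mat U) ** pattern_mat U"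
  from Suc obtain D where D_unitary: "\<forall>j\<in>{1..2*m}. diag_unitary_mat (D j)"
    and D_support: "\<forall>k l. mat_pow ?Q m $ k $ l = 0 \<longleftrightarrow> alt_prod D U m $ k $ l = 0"
    by metis
  obtain D' where D'_unitary: "\<forall>j\<in>{1..2*Suc m}. diag_unitary_mat (D' j)"
    and D'_support: "\<forall>k l. alt_prod D' U (Suc m) $ k $ l \<noteq> 0 \<longleftrightarrow>
        (\<exists>j. alt_prod D U m $ k $ j \<noteq> 0 \<and> (\<exists>i. U $ i $ j \<noteq> 0 \<and> U $ i $ l \<noteq> 0))"
    by (rule alt_prod_Suc_nonzero_iff[OF D_unitary])
  have pow_support: "mat_pow ?Q (Suc m) $ k $ l \<noteq> 0 \<longleftrightarrow>
      (\<exists>j. alt_prod D U m $ k $ j \<noteq> 0 \<and> (\<exists>i. U $ i $ j \<noteq> 0 \<and> U $ i $ l \<noteq> 0))" for k l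
    unfolding mat_pow.simps matrix_mult_nat_nonzero_iff[of "mat_pow ?Q m"] pattern_gram_nonzero_iff
    by (simp only: D_support)
  have "mat_pow ?Q (Suc m) $ k $ l = 0 \<longleftrightarrow> alt_prod D' U (Suc m) $ k $ l = 0" for k l
    using pow_support[of k l] D'_support[rule_format, of k l] by blast
  with D'_unitary show ?case by blast
qed

end
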